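(* Let $\mathfrak g$ be a real nilpotent Lie algebra with a metric $\langle,\rangle$ satisfying $\operatorname{Ric}=\lambda\,\mathrm{id}$ with $\lambda\neq0$, and let $\psi$ be a derivation of $\mathfrak g$, self-adjoint with respect to $\langle,\rangle$, with $\operatorname{Tr}\psi^2\neq0$. Let $\tilde{\mathfrak g}=\mathfrak g\rtimes_\psi\operatorname{Span}\{e_0\}$ be the semidirect product with $[e_0,v]=\psi(v)$ for $v\in\mathfrak g$, and let $\widetilde{\langle,\rangle}=\langle,\rangle-\frac1\lambda(\operatorname{Tr}\psi^2)\,e^0\otimes e^0$, where $e^0$ vanishes on $\mathfrak g$ and $e^0(e_0)=1$. Then $\widetilde{\langle,\rangle}$ satisfies $\widetilde{\operatorname{Ric}}=\lambda\,\mathrm{id}$ and $\tilde{\mathfrak g}=\mathfrak g\oplus^\perp\operatorname{Span}\{e_0\}$ is a pseudo-Iwasawa decomposition.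
   Context: A metric on a Lie algebra is a nondegenerate symmetric bilinear form, possibly indefinite; Ricci operators are those of the corresponding left-invariant pseudo-Riemannian metrics on simply connected Lie groups. A pseudo-Iwasawa decomposition of a metric Lie algebra $\tilde{\mathfrak g}$ is an orthogonal direct sum of vector spaces $\tilde{\mathfrak g}=\mathfrak g\oplus^\perp\mathfrak a$ with $\mathfrak g$ a nilpotent ideal, $\mathfrak a$ an abelian subalgebra, and $\operatorname{ad}X$ self-adjoint for every $X\in\mathfrak a$. *)

theory Defs
  imports "HOL-Analysis.Analysis"
begin

text \<open>Finite-dimensional real vector spaces are modelled by types of class euclidean_space.
  A Lie bracket is a function br; a metric is a bilinear form G.\<close>

definition lie_algebra :: "('a::euclidean_space \<Rightarrow> 'a \<Rightarrow> 'a) \<Rightarrow> bool" where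
  "lie_algebra br \<longleftrightarrow> bilinear br \<and> (\<forall>x. br x x = 0) \<and>
     (\<forall>x y z. br x (br y z) + br y (br z x) + br z (br x y) = 0)"

text \<open>Metric: nondegenerate symmetric bilinear form, possibly indefinite.\<close>
definition metric :: "('a::euclidean_space \<Rightarrow> 'a \<Rightarrow> real) \<Rightarrow> bool" where
  "metric G \<longleftrightarrow> bilinear G \<and> (\<forall>x y. G x y = G y x) \<and> (\<forall>x. (\<forall>y. G x y = 0) \<longrightarrow> x = 0)"

definition trace :: "('a::euclidean_space \<Rightarrow> 'a) \<Rightarrow> real" where
  "trace f = (\<Sum>b\<in>Basis. f b \<bullet> b)"

fun lcs :: "('a::real_vector \<Rightarrow> 'a \<Rightarrow> 'a) \<Rightarrow> 'a set \<Rightarrow> nat \<Rightarrow> 'a set" where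
  "lcs br N 0 = N"
| "lcs br N (Suc k) = span {br x y | x y. x \<in> N \<and> y \<in> lcs br N k}"

definition nilpotent_on :: "('a::real_vector \<Rightarrow> 'a \<Rightarrow> 'a) \<Rightarrow> 'a set \<Rightarrow> bool" where
  "nilpotent_on br N \<longleftrightarrow> (\<exists>k. lcs br N k = {0})"

abbreviation nilpotent_lie :: "('a::real_vector \<Rightarrow> 'a \<Rightarrow> 'a) \<Rightarrow> bool" where
  "nilpotent_lie br \<equiv> nilpotent_on br UNIV"

definition derivation :: "('a::euclidean_space \<Rightarrow> 'a \<Rightarrow> 'a) \<Rightarrow> ('a \<Rightarrow> 'a) \<Rightarrow> bool" where
  "derivation br D \<longleftrightarrow> linear D \<and> (\<forall>x y. D (br x y) = br (D x) y + br x (D y))"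

definition self_adjoint :: "('a \<Rightarrow> 'a \<Rightarrow> real) \<Rightarrow> ('a \<Rightarrow> 'a) \<Rightarrow> bool" where
  "self_adjoint G f \<longleftrightarrow> (\<forall>x y. G (f x) y = G x (f y))"

text \<open>Levi-Civita connection of the left-invariant metric (Koszul formula).\<close>
definition levi_civita :: "('a::euclidean_space \<Rightarrow> 'a \<Rightarrow> 'a) \<Rightarrow> ('a \<Rightarrow> 'a \<Rightarrow> real) \<Rightarrow> 'a \<Rightarrow> 'a \<Rightarrow> 'a" where
  "levi_civita br G X Y = (THE W. \<forall>Z. 2 * G W Z = G (br X Y) Z - G (br Y Z) X + G (br Z X) Y)"

definition curvature :: "('a::euclidean_space \<Rightarrow> 'a \<Rightarrow> 'a) \<Rightarrow> ('a \<Rightarrow> 'a \<Rightarrow> real) \<Rightarrow> 'a \<Rightarrow> 'a \<Rightarrow> 'a \<Rightarrow> 'a" where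
  "curvature br G X Y Z = levi_civita br G X (levi_civita br G Y Z)
      - levi_civita br G Y (levi_civita br G X Z) - levi_civita br G (br X Y) Z"

definition ricci_tensor :: "('a::euclidean_space \<Rightarrow> 'a \<Rightarrow> 'a) \<Rightarrow> ('a \<Rightarrow> 'a \<Rightarrow> real) \<Rightarrow> 'a \<Rightarrow> 'a \<Rightarrow> real" where
  "ricci_tensor br G Y Z = trace (\<lambda>X. curvature br G X Y Z)"

definition ricci_op :: "('a::euclidean_space \<Rightarrow> 'a \<Rightarrow> 'a) \<Rightarrow> ('a \<Rightarrow> 'a \<Rightarrow> real) \<Rightarrow> 'a \<Rightarrow> 'a" where
  "ricci_op br G = (THE R. \<forall>X Y. G (R X) Y = ricci_tensor br G X Y)"

text \<open>Semidirect product g \<rtimes>_psi Span{e0}, modelled on 'a \<times> real with e0 = (0,1).\<close>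
definition sd_bracket :: "('a::real_vector \<Rightarrow> 'a \<Rightarrow> 'a) \<Rightarrow> ('a \<Rightarrow> 'a) \<Rightarrow> 'a \<times> real \<Rightarrow> 'a \<times> real \<Rightarrow> 'a \<times> real" where
  "sd_bracket br psi p q = (br (fst p) (fst q) + snd p *\<^sub>R psi (fst q) - snd q *\<^sub>R psi (fst p), 0)"

definition e0 :: "'a::real_vector \<times> real" where "e0 = (0, 1)"

text \<open>The metric <,> - (1/lambda)(Tr psi^2) e^0 \<otimes> e^0, with <,> extended by zero on e0.\<close>
definition sd_metric :: "('a \<Rightarrow> 'a \<Rightarrow> real) \<Rightarrow> real \<Rightarrow> 'a \<times> real \<Rightarrow> 'a \<times> real \<Rightarrow> real" where
  "sd_metric G c p q = G (fst p) (fst q) - c * snd p * snd q"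

definition pseudo_iwasawa ::
  "('b::euclidean_space \<Rightarrow> 'b \<Rightarrow> 'b) \<Rightarrow> ('b \<Rightarrow> 'b \<Rightarrow> real) \<Rightarrow> 'b set \<Rightarrow> 'b set \<Rightarrow> bool" where
  "pseudo_iwasawa br G N A \<longleftrightarrow>
     subspace N \<and> subspace A \<and> N \<inter> A = {0} \<and> N + A = UNIV \<and>
     (\<forall>n\<in>N. \<forall>a\<in>A. G n a = 0) \<and>
     (\<forall>x. \<forall>y\<in>N. br x y \<in> N) \<and> nilpotent_on br N \<and>
     (\<forall>a\<in>A. \<forall>b\<in>A. br a b = 0) \<and>
     (\<forall>a\<in>A. self_adjoint G (br a))"

end

theory Submission
  imports Defs
begin

text \<open>Write c = tr(psi^2)/lambda. By the Koszul formula the Levi-Civita connection of the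
  extended metric is explicit, nabla~_(x,s) (y,t) = (nabla_x y - t psi x, - <psi x, y>/c).
  Tracing its curvature, Ric~ differs from Ric = lambda id only by traces of maps lowering the
  lower central series (zero, as g is nilpotent), traces of skew-adjoint times self-adjoint
  maps (zero), a multiple of tr psi, and the term -t u tr(psi^2), which the choice of c turns
  into lambda times the e0-part of the metric.
  It remains to see that lambda tr psi = tr (Ric o psi) vanishes. For nilpotent g,
  ric(y,z) = 1/2 <jsq z, y> - 1/4 tr (j y o j z), where <j z x, v> = <z, [x,v]> and
  jsq = sum_i j(e_i) j(e^i); for a self-adjoint derivation D one has j (D y) = j y o D + D o j y,
  so the two terms of tr (Ric o D) are tr (D o jsq)/2 and its negative.\<close>

section \<open>Traces\<close>

lemma trace_add: "trace (\<lambda>x. f x + g x) = trace f + trace g"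
  by (simp add: trace_def inner_add_left sum.distrib)

lemma trace_diff: "trace (\<lambda>x. f x - g x) = trace f - trace g"
  by (simp add: trace_def inner_diff_left sum_subtractf)

lemma trace_scale: "trace (\<lambda>x. r *\<^sub>R f x) = r * trace f"
  by (simp add: trace_def sum_distrib_left)

lemma trace_neg: "trace (\<lambda>x. - f x) = - trace f"
  by (simp add: trace_def sum_negf)

lemma trace_sum: "finite I \<Longrightarrow> trace (\<lambda>x. \<Sum>i\<in>I. f i x) = (\<Sum>i\<in>I. trace (f i))"
  by (induction I rule: finite_induct) (simp_all add: trace_add trace_def)

lemma trace_rank_one:
  assumes "linear l"
  shows "trace (\<lambda>x. l x *\<^sub>R w) = l w"
proof -
  have "l w = l (\<Sum>b\<in>Basis. (w \<bullet> b) *\<^sub>R b)"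
    by (simp add: euclidean_representation)
  also have "\<dots> = (\<Sum>b\<in>Basis. (w \<bullet> b) * l b)"
    using assms by (simp add: linear_sum linear_scale)
  finally show ?thesis
    by (simp add: trace_def mult.commute)
qed

lemma trace_comp_commute:
  fixes A B :: "'a::euclidean_space \<Rightarrow> 'a"
  assumes "linear A" "linear B"
  shows "trace (A \<circ> B) = trace (B \<circ> A)"
proof -
  have expand: "trace (C \<circ> D) = (\<Sum>b\<in>Basis. \<Sum>c\<in>Basis. (D b \<bullet> c) * (C c \<bullet> b))"
    if "linear C" for C D :: "'a \<Rightarrow> 'a"
  proof -
    have "C (D b) = C (\<Sum>c\<in>Basis. (D b \<bullet> c) *\<^sub>R c)" for b
      by (simp add: euclidean_representation)
    then show ?thesis
      using that by (simp add: trace_def inner_sum_left linear_sum linear_scale)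
  qed
  show ?thesis
    unfolding expand[OF assms(1)] expand[OF assms(2)]
    by (subst sum.swap) (simp add: mult.commute)
qed

lemma trace_adjoint:
  fixes A :: "'a::euclidean_space \<Rightarrow> 'a"
  assumes "linear A"
  shows "trace (adjoint A) = trace A"
  by (simp add: trace_def adjoint_works[OF assms] inner_commute)

lemma trace_prod:
  fixes F :: "'a::euclidean_space \<times> real \<Rightarrow> 'a \<times> real"
  shows "trace F = trace (\<lambda>x. fst (F (x, 0))) + snd (F (0, 1))"
proof -
  have "inj_on (\<lambda>u. (u::'a, 0::real)) Basis" "inj_on (\<lambda>u. (0::'a, u::real)) Basis"
    by (auto intro!: inj_onI)
  then have "(\<Sum>b\<in>Basis. F b \<bullet> b)
      = (\<Sum>i\<in>Basis. F (i, 0) \<bullet> (i, 0)) + (\<Sum>i\<in>Basis. F (0, i) \<bullet> (0, i))"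
    unfolding Basis_prod_def
    by (subst sum.union_disjoint) (auto simp: Basis_prod_def sum.reindex)
  then show ?thesis
    by (simp add: trace_def inner_Pair_0)
qed

text \<open>Composing with projections onto the steps of the filtration, cyclicity moves the trace
  of A from one step to the next, down to the zero subspace.\<close>

lemma trace_filtration_lowering:
  fixes A :: "'a::euclidean_space \<Rightarrow> 'a" and V :: "nat \<Rightarrow> 'a set"
  assumes "linear A" and subspace: "\<And>k. subspace (V k)"
    and "V 0 = UNIV" and "V m = {0}" and decreasing: "\<And>k. V (Suc k) \<subseteq> V k"
    and lowering: "\<And>k x. x \<in> V k \<Longrightarrow> A x \<in> V (Suc k)"
  shows "trace A = 0"
proof -
  have "\<exists>P. linear P \<and> (\<forall>x. P x \<in> V k) \<and> (\<forall>v\<in>V k. P v = v)" for k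
  proof -
    obtain P where "range P \<subseteq> V k" "linear P" "\<forall>v\<in>V k. P v = v"
      using linear_exists_left_inverse_on[of id "V k"] subspace by (auto simp: linear_id)
    then show ?thesis
      by blast
  qed
  then obtain P where linP: "\<And>k. linear (P k)" and P_in: "\<And>k x. P k x \<in> V k"
    and P_id: "\<And>k v. v \<in> V k \<Longrightarrow> P k v = v"
    by metis
  have step: "trace (A \<circ> P k) = trace (A \<circ> P (Suc k))" for k
  proof -
    have "A \<circ> P k = P (Suc k) \<circ> (A \<circ> P k)"
      by (rule ext) (simp add: P_id lowering P_in)
    then have "trace (A \<circ> P k) = trace (P (Suc k) \<circ> (A \<circ> P k))"
      by (rule arg_cong)
    also have "\<dots> = trace ((A \<circ> P k) \<circ> P (Suc k))"
      by (rule trace_comp_commute) (simp_all add: linP \<open>linear A\<close> linear_compose)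
    also have "(A \<circ> P k) \<circ> P (Suc k) = A \<circ> P (Suc k)"
      by (rule ext) (simp add: P_id P_in decreasing[THEN subsetD])
    finally show ?thesis .
  qed
  have all_steps: "trace (A \<circ> P 0) = trace (A \<circ> P k)" for k
  proof (induction k)
    case (Suc k)
    then show ?case
      using step[of k] by (rule trans)
  qed simp
  have "A \<circ> P 0 = A"
    by (rule ext) (simp add: P_id \<open>V 0 = UNIV\<close>)
  then have "trace A = trace (A \<circ> P 0)"
    by simp
  also have "\<dots> = trace (A \<circ> P m)"
    by (rule all_steps)
  also have "A \<circ> P m = (\<lambda>x. 0)"
    using P_in[of m] \<open>V m = {0}\<close> \<open>linear A\<close> by (auto simp: linear_0)
  finally show ?thesis
    by (simp add: trace_def)
qed

section \<open>Adjoints with respect to a metric\<close>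

definition skew_adjoint :: "('a \<Rightarrow> 'a \<Rightarrow> real) \<Rightarrow> ('a \<Rightarrow> 'a) \<Rightarrow> bool" where
  "skew_adjoint G f \<longleftrightarrow> (\<forall>x y. G (f x) y = - G x (f y))"

locale pseudo_euclidean =
  fixes G :: "'a::euclidean_space \<Rightarrow> 'a \<Rightarrow> real"
  assumes metric: "metric G"
begin

lemma bilinear_G: "bilinear G"
  using metric by (simp add: metric_def)

lemma G_sym: "G x y = G y x"
  using metric by (simp add: metric_def)

lemmas G_simps [simp] = bilinear_ladd[OF bilinear_G] bilinear_radd[OF bilinear_G]
  bilinear_lmul[OF bilinear_G] bilinear_rmul[OF bilinear_G] bilinear_lneg[OF bilinear_G]
  bilinear_rneg[OF bilinear_G] bilinear_lzero[OF bilinear_G] bilinear_rzero[OF bilinear_G]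
  bilinear_lsub[OF bilinear_G] bilinear_rsub[OF bilinear_G]

lemma linear_G_left: "linear (\<lambda>x. G x y)"
  using bilinear_G by (simp add: bilinear_def)

lemma G_sum_left: "G (\<Sum>i\<in>I. f i) y = (\<Sum>i\<in>I. G (f i) y)"
  using linear_sum[OF linear_G_left, of f I] by (simp add: o_def)

lemma G_eqI:
  assumes "\<And>z. G u z = G v z"
  shows "u = v"
proof -
  have "G (u - v) z = 0" for z
    using assms by simp
  then have "u - v = 0"
    using metric unfolding metric_def by blast
  then show ?thesis
    by simp
qed

definition gram :: "'a \<Rightarrow> 'a" where
  "gram w = (\<Sum>b\<in>Basis. G b w *\<^sub>R b)"

lemma inner_gram: "x \<bullet> gram w = G x w"
proof -
  have "G x w = G (\<Sum>b\<in>Basis. (x \<bullet> b) *\<^sub>R b) w"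
    by (simp add: euclidean_representation)
  then show ?thesis
    by (simp add: gram_def G_sum_left inner_sum_right mult.commute)
qed

lemma linear_gram: "linear gram"
  by (rule linearI) (simp_all add: gram_def scaleR_add_left sum.distrib scaleR_sum_right)

lemma inj_gram: "inj gram"
  by (rule injI, rule G_eqI) (metis G_sym inner_gram)

lemma gram_inv_gram [simp]: "gram (inv gram v) = v"
  using linear_injective_imp_surjective[OF linear_gram inj_gram] by (simp add: surj_f_inv_f)

lemma linear_inv_gram: "linear (inv gram)"
  by (rule inj_linear_imp_inv_linear[OF linear_gram inj_gram])

text \<open>For b \<in> Basis, the vectors inv gram b form the basis G-dual to Basis.\<close>

lemma G_inv_gram: "G x (inv gram v) = x \<bullet> v"
  by (simp flip: inner_gram)

lemma G_representation:
  assumes "linear l"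
  obtains w where "\<And>x. G x w = l x"
proof
  \<comment> \<open>adjoint l 1 is the Euclidean representative of the functional l\<close>
  show "G x (inv gram (adjoint l 1)) = l x" for x
    using adjoint_works[OF assms] by (simp add: G_inv_gram)
qed

lemma trace_eq_sum_G: "trace A = (\<Sum>b\<in>Basis. G (A b) (inv gram b))"
  by (simp add: trace_def G_inv_gram)

definition adj :: "('a \<Rightarrow> 'a) \<Rightarrow> 'a \<Rightarrow> 'a" where
  "adj A = inv gram \<circ> adjoint A \<circ> gram"

lemma G_adj: "linear A \<Longrightarrow> G (A x) y = G x (adj A y)"
  by (simp add: adj_def G_inv_gram adjoint_works flip: inner_gram)

lemma G_adj_left:
  assumes "linear A"
  shows "G (adj A x) y = G x (A y)"
proof -
  have "G (adj A x) y = G y (adj A x)"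
    by (rule G_sym)
  also have "\<dots> = G (A y) x"
    by (rule G_adj[OF assms, symmetric])
  also have "\<dots> = G x (A y)"
    by (rule G_sym)
  finally show ?thesis .
qed

lemma linear_adj: "linear A \<Longrightarrow> linear (adj A)"
  unfolding adj_def by (intro linear_compose linear_gram linear_inv_gram adjoint_linear)

lemma adj_eqI:
  assumes "linear A" and "\<And>x y. G (A x) y = G x (B y)"
  shows "adj A = B"
proof (rule ext, rule G_eqI)
  fix x z
  have "G (adj A x) z = G (A z) x"
    using G_adj_left[OF assms(1)] G_sym by metis
  also have "\<dots> = G (B x) z"
    using assms(2) G_sym by metis
  finally show "G (adj A x) z = G (B x) z" .
qed

lemma adj_adj: "linear A \<Longrightarrow> adj (adj A) = A"
  by (rule adj_eqI) (simp_all add: linear_adj G_adj_left)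

lemma adj_comp: "linear A \<Longrightarrow> linear B \<Longrightarrow> adj (A \<circ> B) = adj B \<circ> adj A"
  by (rule adj_eqI) (simp_all add: linear_compose G_adj[of A] G_adj[of B])

lemma adj_self_adjoint: "linear S \<Longrightarrow> self_adjoint G S \<Longrightarrow> adj S = S"
  by (rule adj_eqI) (simp_all add: self_adjoint_def)

lemma adj_skew_adjoint: "linear K \<Longrightarrow> skew_adjoint G K \<Longrightarrow> adj K = (\<lambda>x. - K x)"
  by (rule adj_eqI) (simp_all add: skew_adjoint_def)

lemma trace_adj:
  assumes "linear A"
  shows "trace (adj A) = trace A"
proof -
  have "trace (adj A) = trace (inv gram \<circ> (adjoint A \<circ> gram))"
    by (simp only: adj_def comp_assoc)
  also have "\<dots> = trace ((adjoint A \<circ> gram) \<circ> inv gram)"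
    using assms
    by (intro trace_comp_commute) (simp_all add: linear_compose linear_gram linear_inv_gram adjoint_linear)
  also have "(adjoint A \<circ> gram) \<circ> inv gram = adjoint A"
    by (rule ext) simp
  also have "trace (adjoint A) = trace A"
    by (rule trace_adjoint[OF assms])
  finally show ?thesis .
qed

lemma trace_eq_sum_G_dual:
  assumes "linear A"
  shows "trace A = (\<Sum>b\<in>Basis. G (A (inv gram b)) b)"
proof -
  have "G (A (inv gram b)) b = G (adj A b) (inv gram b)" for b
    using assms by (simp only: G_adj[of A "inv gram b" b] G_sym[of "inv gram b"])
  moreover have "trace A = trace (adj A)"
    using assms by (simp add: trace_adj)
  ultimately show ?thesis
    by (simp add: trace_eq_sum_G[of "adj A"])
qed

lemma trace_adj_comp:
  assumes "linear A" "linear B"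
  shows "trace (adj A \<circ> B) = trace (adj B \<circ> A)"
proof -
  have "trace (adj A \<circ> B) = trace (adj (adj A \<circ> B))"
    using assms by (simp add: trace_adj linear_adj linear_compose)
  also have "adj (adj A \<circ> B) = adj B \<circ> A"
    using assms by (simp add: adj_comp linear_adj adj_adj)
  finally show ?thesis .
qed

lemma trace_comp_adj:
  assumes "linear A" "linear B"
  shows "trace (A \<circ> adj B) = trace (adj A \<circ> B)"
proof -
  have "trace (A \<circ> adj B) = trace (adj B \<circ> A)"
    using assms by (simp add: trace_comp_commute linear_adj)
  also have "\<dots> = trace (adj A \<circ> B)"
    by (rule trace_adj_comp[OF assms(2,1)])
  finally show ?thesis .
qed

lemma trace_adj_comp_adj:
  assumes "linear A" "linear B"
  shows "trace (adj A \<circ> adj B) = trace (A \<circ> B)"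
proof -
  have "trace (adj A \<circ> adj B) = trace (adj (adj B) \<circ> A)"
    using assms by (simp add: trace_adj_comp linear_adj)
  also have "\<dots> = trace (A \<circ> B)"
    using assms by (simp add: adj_adj trace_comp_commute)
  finally show ?thesis .
qed

lemma trace_skew_adjoint: "linear K \<Longrightarrow> skew_adjoint G K \<Longrightarrow> trace K = 0"
  using trace_adj[of K] by (simp add: adj_skew_adjoint trace_neg)

lemma trace_adj_comp_skew:
  assumes "linear A" "linear K" "skew_adjoint G K"
  shows "trace (adj A \<circ> K) = - trace (A \<circ> K)"
proof -
  have "trace (adj A \<circ> K) = trace (adj K \<circ> A)"
    using assms by (simp add: trace_adj_comp)
  also have "\<dots> = - trace (K \<circ> A)"
    using assms by (simp add: adj_skew_adjoint trace_neg o_def)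
  finally show ?thesis
    using assms by (simp add: trace_comp_commute)
qed

lemma trace_skew_comp_self_adjoint:
  assumes "linear K" "skew_adjoint G K" "linear S" "self_adjoint G S"
  shows "trace (K \<circ> S) = 0"
proof -
  have "adj (K \<circ> S) = (\<lambda>x. - (S \<circ> K) x)"
    using adj_comp[OF assms(1,3)] adj_skew_adjoint[OF assms(1,2)] adj_self_adjoint[OF assms(3,4)]
    by (simp add: o_def linear_neg[OF assms(3)])
  moreover have "trace (K \<circ> S) = trace (adj (K \<circ> S))"
    using assms by (simp add: trace_adj linear_compose)
  ultimately have "trace (K \<circ> S) = - trace (S \<circ> K)"
    by (simp only: trace_neg)
  then show ?thesis
    using trace_comp_commute[OF assms(1,3)] by simp
qed

lemma trace_skew_self_adjoint_skew:
  assumes "linear K" "skew_adjoint G K" "linear S" "self_adjoint G S"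
    and "linear K'" "skew_adjoint G K'"
  shows "trace (K \<circ> S \<circ> K') = trace (S \<circ> K \<circ> K')"
proof -
  have lin: "linear (K \<circ> S \<circ> K')" "linear (S \<circ> K)"
    using assms by (simp_all add: linear_compose)
  have "adj (K \<circ> S \<circ> K') = adj K' \<circ> (adj S \<circ> adj K)"
    using assms by (simp only: adj_comp linear_compose)
  then have "adj (K \<circ> S \<circ> K') = K' \<circ> (S \<circ> K)"
    using assms by (simp add: adj_self_adjoint adj_skew_adjoint o_def linear_neg)
  then have "trace (K \<circ> S \<circ> K') = trace (K' \<circ> (S \<circ> K))"
    using trace_adj[OF lin(1)] by simp
  also have "\<dots> = trace (S \<circ> K \<circ> K')"
    using trace_comp_commute[OF assms(5) lin(2)] by simp
  finally show ?thesis .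
qed

end

section \<open>Lie algebras and their lower central series\<close>

locale real_lie_algebra =
  fixes br :: "'a::euclidean_space \<Rightarrow> 'a \<Rightarrow> 'a"
  assumes lie_algebra: "lie_algebra br"
begin

lemma bilinear_br: "bilinear br"
  using lie_algebra by (simp add: lie_algebra_def)

lemma br_self [simp]: "br x x = 0"
  using lie_algebra by (simp add: lie_algebra_def)

lemma jacobi: "br x (br y z) + br y (br z x) + br z (br x y) = 0"
  using lie_algebra by (simp add: lie_algebra_def)

lemmas br_simps [simp] = bilinear_ladd[OF bilinear_br] bilinear_radd[OF bilinear_br]
  bilinear_lmul[OF bilinear_br] bilinear_rmul[OF bilinear_br] bilinear_lneg[OF bilinear_br]
  bilinear_rneg[OF bilinear_br] bilinear_lzero[OF bilinear_br] bilinear_rzero[OF bilinear_br]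
  bilinear_lsub[OF bilinear_br] bilinear_rsub[OF bilinear_br]

lemma br_anticomm: "br x y = - br y x"
proof -
  have "br (x + y) (x + y) = br x y + br y x"
    by (simp del: br_self) simp
  then have "br x y + br y x = 0"
    by (simp add: add.commute)
  then show ?thesis
    by (simp add: eq_neg_iff_add_eq_0)
qed

lemma linear_br: "linear (br x)"
  using bilinear_br by (simp add: bilinear_def)

lemma subspace_lcs: "subspace (lcs br UNIV k)"
  by (cases k) (simp_all add: subspace_UNIV subspace_span)

lemma lcs_Suc_subset: "lcs br UNIV (Suc k) \<subseteq> lcs br UNIV k"
proof (induction k)
  case (Suc k)
  then show ?case
    by (simp only: lcs.simps) (rule span_mono, blast)
qed simp

lemma br_in_lcs_Suc: "x \<in> lcs br UNIV k \<Longrightarrow> br w x \<in> lcs br UNIV (Suc k)"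
  by (simp only: lcs.simps) (rule span_base, blast)

lemma derivation_in_lcs:
  assumes "derivation br D" and "x \<in> lcs br UNIV k"
  shows "D x \<in> lcs br UNIV k"
  using assms(2)
proof (induction k arbitrary: x)
  case (Suc k)
  let ?S = "{br a b |a b. a \<in> UNIV \<and> b \<in> lcs br UNIV k}"
  have linD: "linear D" and leibniz: "\<And>a b. D (br a b) = br (D a) b + br a (D b)"
    using assms(1) by (simp_all add: derivation_def)
  have "D ` ?S \<subseteq> span ?S"
  proof
    fix v
    assume "v \<in> D ` ?S"
    then obtain a b where v: "v = D (br a b)" and b: "b \<in> lcs br UNIV k"
      by blast
    have "br (D a) b \<in> span ?S" "br a (D b) \<in> span ?S"
      using b Suc.IH[OF b] by (auto intro: span_base)
    then show "v \<in> span ?S"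
      by (simp add: v leibniz span_add)
  qed
  then have "span (D ` ?S) \<subseteq> span ?S"
    by (simp add: span_minimal)
  moreover have "D x \<in> span (D ` ?S)"
    using Suc.prems by (simp add: span_linear_image[OF linD])
  ultimately show ?case
    by (simp only: lcs.simps) blast
qed simp

end

locale nilpotent_lie_algebra = real_lie_algebra +
  assumes nilpotent: "nilpotent_lie br"
begin

lemma trace_lcs_lowering:
  assumes "linear A" and "\<And>k x. x \<in> lcs br UNIV k \<Longrightarrow> A x \<in> lcs br UNIV (Suc k)"
  shows "trace A = 0"
proof -
  obtain m where "lcs br UNIV m = {0}"
    using nilpotent by (auto simp: nilpotent_on_def)
  then show ?thesis
    using trace_filtration_lowering[of A "lcs br UNIV" m] assms subspace_lcs lcs_Suc_subset
    by simp
qed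

lemma trace_br: "trace (br w) = 0"
  by (rule trace_lcs_lowering[OF linear_br br_in_lcs_Suc])

lemma trace_br_comp_br: "trace (br z \<circ> br y) = 0"
proof (rule trace_lcs_lowering)
  show "linear (br z \<circ> br y)"
    by (intro linear_compose linear_br)
  show "(br z \<circ> br y) x \<in> lcs br UNIV (Suc k)" if "x \<in> lcs br UNIV k" for k x
    unfolding o_def
    by (rule br_in_lcs_Suc, rule lcs_Suc_subset[THEN subsetD], rule br_in_lcs_Suc[OF that])
qed

lemma trace_br_comp_derivation:
  assumes "derivation br D"
  shows "trace (br z \<circ> D) = 0"
proof (rule trace_lcs_lowering)
  show "linear (br z \<circ> D)"
    using assms by (intro linear_compose linear_br) (simp add: derivation_def)
  show "(br z \<circ> D) x \<in> lcs br UNIV (Suc k)" if "x \<in> lcs br UNIV k" for k x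
    unfolding o_def by (rule br_in_lcs_Suc, rule derivation_in_lcs[OF assms that])
qed

lemma trace_derivation_comp_br:
  assumes "derivation br D"
  shows "trace (D \<circ> br z) = 0"
proof (rule trace_lcs_lowering)
  show "linear (D \<circ> br z)"
    using assms by (intro linear_compose linear_br) (simp add: derivation_def)
  show "(D \<circ> br z) x \<in> lcs br UNIV (Suc k)" if "x \<in> lcs br UNIV k" for k x
    unfolding o_def by (rule derivation_in_lcs[OF assms], rule br_in_lcs_Suc[OF that])
qed

end

section \<open>Metric Lie algebras\<close>

locale metric_lie_algebra = pseudo_euclidean G + real_lie_algebra br
  for G :: "'a::euclidean_space \<Rightarrow> 'a \<Rightarrow> real" and br :: "'a \<Rightarrow> 'a \<Rightarrow> 'a"
begin

abbreviation lc :: "'a \<Rightarrow> 'a \<Rightarrow> 'a" where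
  "lc \<equiv> levi_civita br G"

definition j :: "'a \<Rightarrow> 'a \<Rightarrow> 'a" where
  "j z x = adj (br x) z"

lemma G_j: "G (j z x) v = G z (br x v)"
  by (simp add: j_def G_adj_left linear_br)

lemma linear_j: "linear (j z)"
  by (rule linearI) (rule G_eqI, simp add: G_j)+

lemma skew_adjoint_j: "skew_adjoint G (j z)"
proof -
  have "G (j z x) y = - G x (j z y)" for x y
    using G_sym[of x "j z y"] by (simp add: G_j br_anticomm[of x y])
  then show ?thesis
    unfolding skew_adjoint_def by blast
qed

lemma koszul_sym:
  "G (br x y) z - G (br y z) x + G (br z x) y = G (br x y) z - G y (br x z) - G x (br y z)"
  by (simp add: G_sym[of y] G_sym[of x "br y z"] br_anticomm[of z x])

lemma levi_civita_eqI:
  assumes "\<And>z. 2 * G W z = G (br x y) z - G (br y z) x + G (br z x) y"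
  shows "lc x y = W"
  unfolding levi_civita_def
proof (rule the_equality)
  show "\<forall>z. 2 * G W z = G (br x y) z - G (br y z) x + G (br z x) y"
    using assms by blast
  fix W'
  assume "\<forall>z. 2 * G W' z = G (br x y) z - G (br y z) x + G (br z x) y"
  with assms show "W' = W"
    by (intro G_eqI) (metis mult_cancel_left zero_neq_numeral)
qed

lemma levi_civita_eq: "lc x y = (1/2) *\<^sub>R (br x y - adj (br x) y - j x y)"
  by (rule levi_civita_eqI) (simp add: koszul_sym G_adj_left linear_br G_j)

lemma levi_civita_right: "lc x = (\<lambda>y. (1/2) *\<^sub>R (br x y - adj (br x) y - j x y))"
  by (rule ext) (rule levi_civita_eq)

lemma levi_civita_left: "(\<lambda>x. lc x z) = (\<lambda>x. (-1/2) *\<^sub>R (br z x + adj (br z) x + j z x))"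
  by (rule ext) (simp add: levi_civita_eq j_def br_anticomm[of _ z] algebra_simps)

lemmas linear_combination_intros =
  real_vector.module_hom_add real_vector.module_hom_sub real_vector.module_hom_scale

lemma linear_levi_civita: "linear (lc x)"
  unfolding levi_civita_right by (intro linear_combination_intros linear_br linear_adj linear_j)

lemma linear_levi_civita_left: "linear (\<lambda>x. lc x z)"
  unfolding levi_civita_left by (intro linear_combination_intros linear_br linear_adj linear_j)

lemma bilinear_levi_civita: "bilinear lc"
  by (simp add: bilinear_def linear_levi_civita linear_levi_civita_left)

lemmas levi_civita_simps =
  bilinear_ladd[OF bilinear_levi_civita] bilinear_radd[OF bilinear_levi_civita]
  bilinear_lmul[OF bilinear_levi_civita] bilinear_rmul[OF bilinear_levi_civita]
  bilinear_lneg[OF bilinear_levi_civita] bilinear_rneg[OF bilinear_levi_civita]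
  bilinear_lzero[OF bilinear_levi_civita] bilinear_rzero[OF bilinear_levi_civita]
  bilinear_lsub[OF bilinear_levi_civita] bilinear_rsub[OF bilinear_levi_civita]

lemma skew_adjoint_levi_civita: "skew_adjoint G (lc x)"
  unfolding skew_adjoint_def levi_civita_eq
  using skew_adjoint_j[of x]
  by (simp add: skew_adjoint_def G_adj[OF linear_br] G_adj_left[OF linear_br] algebra_simps)

lemma levi_civita_torsion_free: "lc x z - lc z x = br x z"
proof -
  have "lc x z - lc z x = (1/2) *\<^sub>R (br x z - br z x)"
    by (simp add: levi_civita_eq j_def algebra_simps)
  then show ?thesis
    by (simp add: br_anticomm[of z x] flip: scaleR_2)
qed

lemma trace_levi_civita_left: "trace (\<lambda>x. lc x w) = - trace (br w)"
proof -
  have "trace (j w) = 0"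
    by (rule trace_skew_adjoint[OF linear_j skew_adjoint_j])
  then show ?thesis
    unfolding levi_civita_left
    by (simp add: trace_neg trace_scale trace_add trace_adj linear_br)
qed

lemma linear_curvature: "linear (curvature br G x y)"
  by (rule linearI) (simp_all add: curvature_def levi_civita_simps algebra_simps)

lemma linear_ricci_tensor: "linear (ricci_tensor br G y)"
proof (rule linearI)
  fix u v
  have "(\<lambda>x. curvature br G x y (u + v)) = (\<lambda>x. curvature br G x y u + curvature br G x y v)"
    by (simp add: linear_add[OF linear_curvature])
  then show "ricci_tensor br G y (u + v) = ricci_tensor br G y u + ricci_tensor br G y v"
    by (simp add: ricci_tensor_def trace_add)
next
  fix r u
  have "(\<lambda>x. curvature br G x y (r *\<^sub>R u)) = (\<lambda>x. r *\<^sub>R curvature br G x y u)"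
    by (simp add: linear_scale[OF linear_curvature])
  then show "ricci_tensor br G y (r *\<^sub>R u) = r *\<^sub>R ricci_tensor br G y u"
    by (simp add: ricci_tensor_def trace_scale)
qed

lemma ricci_op_eqI:
  assumes "\<And>x y. ricci_tensor br G x y = G (R x) y"
  shows "ricci_op br G = R"
  unfolding ricci_op_def
proof (rule the_equality)
  show "\<forall>x y. G (R x) y = ricci_tensor br G x y"
    using assms by simp
  fix R'
  assume "\<forall>x y. G (R' x) y = ricci_tensor br G x y"
  then show "R' = R"
    using assms by (intro ext G_eqI) simp
qed

lemma ricci_tensor_ricci_op: "ricci_tensor br G x y = G (ricci_op br G x) y"
proof -
  have "\<forall>x. \<exists>w. \<forall>y. ricci_tensor br G x y = G w y"
    by (metis G_representation[OF linear_ricci_tensor] G_sym)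
  then obtain R where "\<And>x y. ricci_tensor br G x y = G (R x) y"
    by metis
  then show ?thesis
    using ricci_op_eqI by metis
qed

text \<open>Both lc y and lc (-) z are combinations of ad, its adjoint and j; expanding the
  trace of their composition, all but two kinds of terms cancel by cyclicity and adjunction.\<close>

lemma trace_levi_civita_comp:
  "trace (lc y \<circ> (\<lambda>x. lc x z)) = (trace (j y \<circ> j z) - 2 * trace (br y \<circ> j z)) / 4"
proof -
  define A B J K where "A = br y" and "B = br z" and "J = j y" and "K = j z"
  have lin: "linear A" "linear B" "linear J" "linear K" "linear (adj A)" "linear (adj B)"
    by (simp_all add: A_def B_def J_def K_def linear_br linear_j linear_adj)
  have skew: "skew_adjoint G J" "skew_adjoint G K"
    by (simp_all add: J_def K_def skew_adjoint_j)
  have L: "(\<lambda>x. lc x z) = (\<lambda>x. (-1/2) *\<^sub>R (B x + adj B x + K x))"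
    unfolding B_def K_def by (rule levi_civita_left)
  have lc_y: "lc y = (\<lambda>x. (1/2) *\<^sub>R (A x - adj A x - J x))"
    unfolding A_def J_def by (rule levi_civita_right)
  have "lc y \<circ> (\<lambda>x. lc x z) = (\<lambda>x. (-1/4) *\<^sub>R (A (B x) + A (adj B x) + A (K x) - adj A (B x)
      - adj A (adj B x) - adj A (K x) - J (B x) - J (adj B x) - J (K x)))"
    unfolding L lc_y
    by (rule ext) (simp add: lin linear_add linear_diff linear_scale linear_neg algebra_simps)
  then have "trace (lc y \<circ> (\<lambda>x. lc x z)) = (-1/4) * (trace (A \<circ> B) + trace (A \<circ> adj B)
      + trace (A \<circ> K) - trace (adj A \<circ> B) - trace (adj A \<circ> adj B) - trace (adj A \<circ> K)
      - trace (J \<circ> B) - trace (J \<circ> adj B) - trace (J \<circ> K))"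
    by (simp only: trace_scale trace_add trace_diff o_def)
  also have "\<dots> = (trace (J \<circ> K) - 2 * trace (A \<circ> K)) / 4"
    using trace_comp_adj[of A B] trace_adj_comp_adj[of A B] trace_adj_comp_skew[of A K]
      trace_adj_comp_skew[of B J] trace_comp_commute[of J "adj B"] trace_comp_commute[of J B]
    by (simp add: lin skew field_simps)
  finally show ?thesis
    by (simp only: A_def J_def K_def)
qed

lemma trace_levi_civita_left_comp_br:
  "trace ((\<lambda>x. lc x z) \<circ> br y)
    = (-1/2) * (trace (br z \<circ> br y) + trace (adj (br z) \<circ> br y) + trace (j z \<circ> br y))"
proof -
  have "(\<lambda>x. lc x z) \<circ> br y = (\<lambda>x. (-1/2) *\<^sub>R (br z (br y x) + adj (br z) (br y x) + j z (br y x)))"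
    unfolding levi_civita_left by (rule ext) simp
  then show ?thesis
    by (simp only: trace_scale trace_add o_def)
qed

lemma ricci_tensor_formula:
  "ricci_tensor br G y z = trace (\<lambda>x. lc x (lc y z)) - trace (br z \<circ> br y) / 2
     - trace (adj (br z) \<circ> br y) / 2 - trace (j y \<circ> j z) / 4"
proof -
  have "lc (br x y) z = - lc (br y x) z" for x
    using linear_neg[OF linear_levi_civita_left, of "br y x" z] by (simp add: br_anticomm[of x y])
  then have "(\<lambda>x. curvature br G x y z)
      = (\<lambda>x. lc x (lc y z) - (lc y \<circ> (\<lambda>x. lc x z)) x + ((\<lambda>x. lc x z) \<circ> br y) x)"
    by (simp add: curvature_def)
  then have "ricci_tensor br G y z = trace (\<lambda>x. lc x (lc y z))
      - trace (lc y \<circ> (\<lambda>x. lc x z)) + trace ((\<lambda>x. lc x z) \<circ> br y)"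
    unfolding ricci_tensor_def by (simp only: trace_add trace_diff)
  then show ?thesis
    using trace_comp_commute[OF linear_br linear_j, of y z]
    by (simp add: trace_levi_civita_comp trace_levi_civita_left_comp_br field_simps)
qed

text \<open>In a Riemannian orthonormal basis this is the familiar sum of the squares j(e_i)^2.\<close>

definition jsq :: "'a \<Rightarrow> 'a" where
  "jsq x = (\<Sum>b\<in>Basis. j b (j (inv gram b) x))"

lemma linear_jsq: "linear jsq"
  unfolding jsq_def
  by (rule linear_compose_sum) (simp add: linear_compose[OF linear_j linear_j, unfolded o_def])

lemma G_jsq: "G (jsq u) v = - trace (adj (br u) \<circ> br v)"
proof -
  have "G b (br (j (inv gram b) u) v) = - G ((br v \<circ> adj (br u)) (inv gram b)) b" for b
    by (simp add: j_def br_anticomm[of _ v] G_sym[of b])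
  then have "G (jsq u) v = - (\<Sum>b\<in>Basis. G ((br v \<circ> adj (br u)) (inv gram b)) b)"
    by (simp add: jsq_def G_sum_left G_j sum_negf)
  also have "\<dots> = - trace (br v \<circ> adj (br u))"
    by (simp add: trace_eq_sum_G_dual linear_compose linear_br linear_adj)
  also have "\<dots> = - trace (adj (br u) \<circ> br v)"
    by (simp add: trace_comp_commute linear_br linear_adj)
  finally show ?thesis .
qed

lemma j_self_adjoint_derivation:
  assumes "derivation br D" "self_adjoint G D"
  shows "j (D y) = (\<lambda>x. j y (D x) + D (j y x))"
  using assms unfolding derivation_def self_adjoint_def
  by (intro ext G_eqI) (simp add: G_j)

lemma trace_j_self_adjoint_derivation:
  assumes "derivation br D" "self_adjoint G D"
  shows "trace (j (D y) \<circ> j w) = 2 * trace (D \<circ> j y \<circ> j w)"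
proof -
  have linD: "linear D"
    using assms(1) by (simp add: derivation_def)
  have "j (D y) \<circ> j w = (\<lambda>x. (j y \<circ> D \<circ> j w) x + (D \<circ> j y \<circ> j w) x)"
    by (simp add: j_self_adjoint_derivation[OF assms] o_def)
  then have "trace (j (D y) \<circ> j w) = trace (j y \<circ> D \<circ> j w) + trace (D \<circ> j y \<circ> j w)"
    by (simp only: trace_add)
  also have "trace (j y \<circ> D \<circ> j w) = trace (D \<circ> j y \<circ> j w)"
    using assms(2) linD by (intro trace_skew_self_adjoint_skew linear_j skew_adjoint_j)
  finally show ?thesis
    by (simp only: mult_2)
qed

end

locale nilpotent_metric_lie_algebra = metric_lie_algebra G br + nilpotent_lie_algebra br
  for G :: "'a::euclidean_space \<Rightarrow> 'a \<Rightarrow> real" and br :: "'a \<Rightarrow> 'a \<Rightarrow> 'a"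
begin

lemma ricci_tensor_nilpotent: "ricci_tensor br G y z = G (jsq z) y / 2 - trace (j y \<circ> j z) / 4"
  using ricci_tensor_formula[of y z] G_jsq[of z y]
  by (simp add: trace_levi_civita_left trace_br trace_br_comp_br)

lemma trace_self_adjoint_derivation_einstein:
  assumes "ricci_op br G = (\<lambda>x. lam *\<^sub>R x)" "lam \<noteq> 0"
    and "derivation br D" "self_adjoint G D"
  shows "trace D = 0"
proof -
  have linD: "linear D"
    using assms(3) by (simp add: derivation_def)
  have "lam * trace D = (\<Sum>b\<in>Basis. ricci_tensor br G (D b) (inv gram b))"
    by (simp add: ricci_tensor_ricci_op assms(1) trace_eq_sum_G sum_distrib_left)
  also have "\<dots> = (\<Sum>b\<in>Basis. G ((D \<circ> jsq) (inv gram b)) b / 2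
      - trace (D \<circ> j b \<circ> j (inv gram b)) / 2)"
    using assms(4)
    by (simp add: ricci_tensor_nilpotent trace_j_self_adjoint_derivation[OF assms(3,4)]
        self_adjoint_def G_sym[of "jsq _"])
  also have "\<dots> = trace (D \<circ> jsq) / 2 - trace (D \<circ> jsq) / 2"
  proof -
    have "(\<Sum>b\<in>Basis. trace (D \<circ> j b \<circ> j (inv gram b))) = trace (D \<circ> jsq)"
      by (simp add: o_def jsq_def linear_sum[OF linD] trace_sum)
    then show ?thesis
      by (simp add: sum_subtractf trace_eq_sum_G_dual linear_compose linD linear_jsq
          flip: sum_divide_distrib)
  qed
  finally show ?thesis
    using assms(2) by simp
qed

end

section \<open>The semidirect extension\<close>

lemma sd_bracket_Pair [simp]:
  "sd_bracket br psi (x, s) (y, t) = (br x y + s *\<^sub>R psi y - t *\<^sub>R psi x, 0)"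
  by (simp add: sd_bracket_def)

lemma sd_metric_Pair [simp]: "sd_metric G c (x, s) (y, t) = G x y - c * s * t"
  by (simp add: sd_metric_def)

lemma (in pseudo_euclidean) metric_sd_metric:
  assumes "c \<noteq> 0"
  shows "metric (sd_metric G c)"
  unfolding metric_def
proof (intro conjI allI impI)
  show "bilinear (sd_metric G c)"
    unfolding bilinear_def sd_metric_def by (auto intro!: linearI simp: algebra_simps)
  show "sd_metric G c p q = sd_metric G c q p" for p q
    by (simp add: sd_metric_def G_sym)
  fix p :: "'a \<times> real"
  assume degenerate: "\<forall>q. sd_metric G c p q = 0"
  obtain x s where p: "p = (x, s)"
    by (cases p)
  have "x = 0"
    using degenerate[rule_format, of "(_, 0)"] by (intro G_eqI) (simp add: p)
  moreover have "c * s = 0"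
    using degenerate[rule_format, of "(0, 1)"] by (simp add: p)
  ultimately show "p = 0"
    using assms by (simp add: p zero_prod_def)
qed

lemma (in real_lie_algebra) lie_algebra_sd_bracket:
  assumes "derivation br psi"
  shows "lie_algebra (sd_bracket br psi)"
  unfolding lie_algebra_def
proof (intro conjI allI)
  have linpsi: "linear psi"
    using assms by (simp add: derivation_def)
  show "bilinear (sd_bracket br psi)"
    unfolding bilinear_def sd_bracket_def
    by (auto intro!: linearI simp: linear_add[OF linpsi] linear_scale[OF linpsi] algebra_simps)
  show "sd_bracket br psi p p = 0" for p
    by (cases p) (simp add: sd_bracket_def zero_prod_def)
  fix p q r :: "'a \<times> real"
  obtain x s y t z u where "p = (x, s)" "q = (y, t)" "r = (z, u)"
    by (cases p, cases q, cases r)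
  then show "sd_bracket br psi p (sd_bracket br psi q r) + sd_bracket br psi q (sd_bracket br psi r p)
      + sd_bracket br psi r (sd_bracket br psi p q) = 0"
    using jacobi[of x y z] assms
    by (simp add: sd_bracket_def zero_prod_def derivation_def linear_add[OF linpsi]
        linear_scale[OF linpsi] linear_diff[OF linpsi] br_anticomm[of x "psi z"]
        br_anticomm[of y "psi x"] br_anticomm[of z "psi y"] algebra_simps)
qed

lemma lcs_sd_bracket:
  "lcs (sd_bracket br psi) {p. snd p = 0} k = (\<lambda>v. (v, 0::real)) ` lcs br UNIV k"
proof (induction k)
  case 0
  show ?case
    by (auto simp: image_iff)
next
  case (Suc k)
  have lin: "linear (\<lambda>v. (v, 0::real))"
    by (rule linearI) simp_all
  have "{sd_bracket br psi x y |x y. x \<in> {p. snd p = 0} \<and> y \<in> lcs (sd_bracket br psi) {p. snd p = 0} k}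
      = (\<lambda>v. (v, 0::real)) ` {br x y |x y. x \<in> UNIV \<and> y \<in> lcs br UNIV k}"
    unfolding Suc.IH by (force simp: image_iff sd_bracket_def)
  then show ?case
    by (simp only: lcs.simps span_linear_image[OF lin])
qed

lemma (in nilpotent_metric_lie_algebra) pseudo_iwasawa_sd:
  assumes "linear psi" "self_adjoint G psi"
  shows "pseudo_iwasawa (sd_bracket br psi) (sd_metric G c) {p. snd p = 0} (span {e0})"
proof -
  have span_e0: "span {e0} = {(0, k) | k. True}"
    by (auto simp: span_singleton e0_def)
  have "p = (fst p, 0) + (0, snd p)" for p :: "'a \<times> real"
    by simp
  then have sum: "{p :: 'a \<times> real. snd p = 0} + span {e0} = UNIV"
    by (auto simp: span_e0 set_plus_def)
  obtain m where "lcs br UNIV m = {0}"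
    using nilpotent by (auto simp: nilpotent_on_def)
  then have "nilpotent_on (sd_bracket br psi) {p. snd p = 0}"
    unfolding nilpotent_on_def by (metis image_empty image_insert lcs_sd_bracket zero_prod_def)
  with sum assms show ?thesis
    unfolding pseudo_iwasawa_def
    by (auto simp: subspace_def span_e0 zero_prod_def sd_bracket_def sd_metric_def
        self_adjoint_def linear_0)
qed

locale sd_extension = metric_lie_algebra G br
  for G :: "'a::euclidean_space \<Rightarrow> 'a \<Rightarrow> real" and br :: "'a \<Rightarrow> 'a \<Rightarrow> 'a" +
  fixes psi :: "'a \<Rightarrow> 'a" and c :: real
  assumes derivation: "derivation br psi" and self_adjoint: "self_adjoint G psi"
    and c_nonzero: "c \<noteq> 0"
begin

sublocale sd: metric_lie_algebra "sd_metric G c" "sd_bracket br psi"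
  using metric_sd_metric[OF c_nonzero] lie_algebra_sd_bracket[OF derivation]
  by unfold_locales

lemma linear_psi: "linear psi"
  using derivation by (simp add: derivation_def)

lemmas psi_simps [simp] = linear_add[OF linear_psi] linear_scale[OF linear_psi]
  linear_0[OF linear_psi] linear_neg[OF linear_psi] linear_diff[OF linear_psi]

lemma G_psi_commute: "G (psi x) y = G (psi y) x"
  using self_adjoint by (simp add: self_adjoint_def G_sym[of x])

lemma levi_civita_sd: "sd.lc (x, s) (y, t) = (lc x y - t *\<^sub>R psi x, - G (psi x) y / c)"
proof (rule sd.levi_civita_eqI)
  fix p :: "'a \<times> real"
  obtain z u where p: "p = (z, u)"
    by (cases p)
  have "2 * G (lc x y) z = G (br x y) z - G (br y z) x + G (br z x) y"
    by (simp add: levi_civita_eq koszul_sym G_adj_left linear_br G_j)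
  then show "2 * sd_metric G c (lc x y - t *\<^sub>R psi x, - G (psi x) y / c) p
      = sd_metric G c (sd_bracket br psi (x, s) (y, t)) p
        - sd_metric G c (sd_bracket br psi (y, t) p) (x, s)
        + sd_metric G c (sd_bracket br psi p (x, s)) (y, t)"
    using c_nonzero
    by (simp add: p algebra_simps G_psi_commute[of z x] G_psi_commute[of y x] G_psi_commute[of z y])
qed

lemma curvature_sd_fst:
  "fst (curvature (sd_bracket br psi) (sd_metric G c) (x, 0) (y, t) (z, u))
    = curvature br G x y z - u *\<^sub>R lc x (psi y) + (G (psi y) z / c) *\<^sub>R psi x
      + u *\<^sub>R lc y (psi x) - (G (psi x) z / c) *\<^sub>R psi y + t *\<^sub>R lc (psi x) z
      + u *\<^sub>R psi (br x y) - (t * u) *\<^sub>R psi (psi x)"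
  by (simp add: curvature_def levi_civita_sd levi_civita_simps algebra_simps)

lemma curvature_sd_snd:
  "snd (curvature (sd_bracket br psi) (sd_metric G c) (0, 1) (y, t) (z, u)) = G (psi (psi y)) z / c"
  by (simp add: curvature_def levi_civita_sd levi_civita_simps algebra_simps)

lemma ricci_tensor_sd:
  "ricci_tensor (sd_bracket br psi) (sd_metric G c) (y, t) (z, u)
    = ricci_tensor br G y z + u * trace (br (psi y)) + G (psi y) z / c * trace psi
      - t * trace (br z \<circ> psi) - u * trace (psi \<circ> br y) - t * u * trace (psi \<circ> psi)"
proof -
  have rank_one: "trace (\<lambda>x. (G (psi x) z / c) *\<^sub>R psi y) = G (psi (psi y)) z / c"
    by (rule trace_rank_one) (rule linearI, simp_all add: add_divide_distrib)
  have skew_self_adjoint: "trace (\<lambda>x. lc w (psi x)) = 0" for w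
    using trace_skew_comp_self_adjoint[OF linear_levi_civita skew_adjoint_levi_civita
        linear_psi self_adjoint]
    by (simp add: o_def)
  have "lc (psi x) z = lc z (psi x) - br z (psi x)" for x
    using levi_civita_torsion_free[of "psi x" z] br_anticomm[of "psi x" z] by (simp add: algebra_simps)
  then have torsion: "trace (\<lambda>x. lc (psi x) z) = - trace (br z \<circ> psi)"
    using skew_self_adjoint[of z] by (simp add: trace_diff o_def)
  have psi_br: "trace (\<lambda>x. psi (br x y)) = - trace (psi \<circ> br y)"
    by (simp add: br_anticomm[of _ y] trace_neg o_def)
  have "ricci_tensor (sd_bracket br psi) (sd_metric G c) (y, t) (z, u)
      = trace (\<lambda>x. fst (curvature (sd_bracket br psi) (sd_metric G c) (x, 0) (y, t) (z, u)))
        + G (psi (psi y)) z / c"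
    unfolding ricci_tensor_def by (subst trace_prod) (simp add: curvature_sd_snd)
  also have "trace (\<lambda>x. fst (curvature (sd_bracket br psi) (sd_metric G c) (x, 0) (y, t) (z, u)))
      = ricci_tensor br G y z - u * trace (\<lambda>x. lc x (psi y)) + G (psi y) z / c * trace psi
        + u * trace (\<lambda>x. lc y (psi x)) - G (psi (psi y)) z / c + t * trace (\<lambda>x. lc (psi x) z)
        + u * trace (\<lambda>x. psi (br x y)) - t * u * trace (psi \<circ> psi)"
    unfolding curvature_sd_fst
    by (simp only: trace_add trace_diff trace_scale rank_one ricci_tensor_def o_def)
  finally show ?thesis
    using skew_self_adjoint[of y] torsion psi_br by (simp add: trace_levi_civita_left)
qed

lemma ricci_op_sd_einstein:
  assumes "nilpotent_lie br" and "ricci_op br G = (\<lambda>x. lam *\<^sub>R x)" and "lam \<noteq> 0"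
    and "c = trace (psi \<circ> psi) / lam"
  shows "ricci_op (sd_bracket br psi) (sd_metric G c) = (\<lambda>x. lam *\<^sub>R x)"
proof (rule sd.ricci_op_eqI)
  interpret nilpotent_metric_lie_algebra G br
    using assms(1) by unfold_locales
  have "trace psi = 0"
    using trace_self_adjoint_derivation_einstein[OF assms(2,3) derivation self_adjoint] .
  moreover have "trace (psi \<circ> psi) = c * lam"
    using assms(3,4) by simp
  moreover have "ricci_tensor br G y z = lam * G y z" for y z
    by (simp add: ricci_tensor_ricci_op assms(2))
  ultimately show "ricci_tensor (sd_bracket br psi) (sd_metric G c) p q = sd_metric G c (lam *\<^sub>R p) q"
    for p q
    using trace_br trace_br_comp_derivation[OF derivation] trace_derivation_comp_br[OF derivation]
    by (cases p, cases q) (simp add: ricci_tensor_sd algebra_simps)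
qed

end

theorem corollary4p12:
  fixes br :: "'a::euclidean_space \<Rightarrow> 'a \<Rightarrow> 'a"
    and G :: "'a \<Rightarrow> 'a \<Rightarrow> real"
    and psi :: "'a \<Rightarrow> 'a"
    and lam :: real
  assumes "lie_algebra br" and "nilpotent_lie br" and "metric G"
    and "ricci_op br G = (\<lambda>X. lam *\<^sub>R X)" and "lam \<noteq> 0"
    and "derivation br psi" and "self_adjoint G psi"
    and "trace (psi \<circ> psi) \<noteq> 0"
  shows "lie_algebra (sd_bracket br psi)
    \<and> metric (sd_metric G (trace (psi \<circ> psi) / lam))
    \<and> ricci_op (sd_bracket br psi) (sd_metric G (trace (psi \<circ> psi) / lam)) = (\<lambda>X. lam *\<^sub>R X)
    \<and> pseudo_iwasawa (sd_bracket br psi) (sd_metric G (trace (psi \<circ> psi) / lam))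
        {p. snd p = 0} (span {e0})"
proof -
  interpret nilpotent_metric_lie_algebra G br
    using assms(1-3) by unfold_locales
  have "trace (psi \<circ> psi) / lam \<noteq> 0"
    using assms(5,8) by simp
  then interpret sd_extension G br psi "trace (psi \<circ> psi) / lam"
    using assms(6,7) by unfold_locales
  show ?thesis
    using sd.lie_algebra sd.metric ricci_op_sd_einstein[OF assms(2,4,5) refl]
      pseudo_iwasawa_sd[OF linear_psi assms(7)]
    by blast
qed

end
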